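(* Let $(J,F,Y)$ be a pullback triple with Hilbert spaces $\mathcal H,\mathcal X,\mathcal E$. Then: (i) the inverse $Y^{-1}:\mathcal R(Y)\subset\mathcal X\to\mathcal H$ is closable and $J=\overline{Y^{-1}}$; (ii) $Y$ is closable if and only if $J$ is injective, and in this case $\overline{Y}=J^{-1}$; (iii) $Y$ is bounded if and only if $J$ is an isomorphism.
   Context: For Hilbert spaces $\mathcal H,\mathcal X,\mathcal E$, a pullback triple $(J,F,Y)$ consists of operators $J:\mathcal X\to\mathcal H$, $F:\mathcal X\to\mathcal E$, $Y:\mathcal H\to\mathcal X$ such that: $J,F$ are bounded with dense range; $Y$ is a completion operator (densely defined injective linear map with dense range, not necessarily closable); $\|u\|_{\mathcal X}^2=\|Ju\|^2_{\mathcal H}+\|Fu\|_{\mathcal E}^2$ for all $u\in\mathcal X$; and $JYf=f$ for all $f\in\mathcal D(Y)$. *)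

theory Defs
  imports "HOL-Analysis.Analysis"
begin

text \<open>Operators are modelled as a domain set together with a function.
Hilbert spaces are real inner product spaces that are complete.\<close>

definition graph :: "'a set \<Rightarrow> ('a \<Rightarrow> 'b) \<Rightarrow> ('a \<times> 'b) set" where
  "graph D T = {(x, T x) | x. x \<in> D}"

definition linear_op :: "'a::real_vector set \<Rightarrow> ('a \<Rightarrow> 'b::real_vector) \<Rightarrow> bool" where
  "linear_op D T \<longleftrightarrow> subspace D \<and>
     (\<forall>x\<in>D. \<forall>y\<in>D. \<forall>a b::real. T (a *\<^sub>R x + b *\<^sub>R y) = a *\<^sub>R T x + b *\<^sub>R T y)"

definition completion_op :: "'a::real_normed_vector set \<Rightarrow> ('a \<Rightarrow> 'b::real_normed_vector) \<Rightarrow> bool" where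
  "completion_op D T \<longleftrightarrow> linear_op D T \<and> closure D = UNIV \<and> inj_on T D \<and> closure (T ` D) = UNIV"

definition closable :: "'a::topological_space set \<Rightarrow> ('a \<Rightarrow> 'b::topological_space) \<Rightarrow> bool" where
  "closable D T \<longleftrightarrow> (\<forall>x y z. (x, y) \<in> closure (graph D T) \<and> (x, z) \<in> closure (graph D T) \<longrightarrow> y = z)"

definition bounded_op :: "'a::real_normed_vector set \<Rightarrow> ('a \<Rightarrow> 'b::real_normed_vector) \<Rightarrow> bool" where
  "bounded_op D T \<longleftrightarrow> (\<exists>C. \<forall>x\<in>D. norm (T x) \<le> C * norm x)"

definition isomorphism :: "('a::real_normed_vector \<Rightarrow> 'b::real_normed_vector) \<Rightarrow> bool" where
  "isomorphism J \<longleftrightarrow> bounded_linear J \<and> bij J \<and> bounded_linear (inv J)"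

definition pullback_triple ::
  "('x::{real_inner,complete_space} \<Rightarrow> 'h::{real_inner,complete_space}) \<Rightarrow>
   ('x \<Rightarrow> 'e::{real_inner,complete_space}) \<Rightarrow> 'h set \<Rightarrow> ('h \<Rightarrow> 'x) \<Rightarrow> bool" where
  "pullback_triple J F D Y \<longleftrightarrow>
     bounded_linear J \<and> closure (range J) = UNIV \<and>
     bounded_linear F \<and> closure (range F) = UNIV \<and>
     completion_op D Y \<and>
     (\<forall>u. (norm u)\<^sup>2 = (norm (J u))\<^sup>2 + (norm (F u))\<^sup>2) \<and>
     (\<forall>f\<in>D. J (Y f) = f)"

end

theory Submission
  imports Defs
begin

text \<open>Since \<open>J (Y f) = f\<close>, the graph of \<open>Y\<^sup>-\<^sup>1\<close> is the graph of \<open>J\<close> restricted to the dense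
range of \<open>Y\<close>, and the graph of \<open>Y\<close> is its transpose. The graph of the continuous map \<open>J\<close> is
closed, so these closures are the full graph of \<open>J\<close> and its transpose; the transpose is the
graph of an operator exactly when \<open>J\<close> is injective. Boundedness of \<open>Y\<close> says that \<open>J\<close> is bounded
below on the range of \<open>Y\<close>, hence everywhere by density; a bounded-below operator has closed range, which
together with dense range makes \<open>J\<close> an isomorphism.\<close>

lemma graph_eq_image: "graph S T = (\<lambda>x. (x, T x)) ` S"
  unfolding graph_def by auto

lemma closure_image_dense:
  assumes "continuous_on UNIV h" and "closure S = UNIV" and "closed (range h)"
  shows "closure (h ` S) = range h"
proof
  show "closure (h ` S) \<subseteq> range h"
    using assms(3) by (intro closure_minimal) auto
  have "h ` closure S \<subseteq> closure (h ` S)"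
    using continuous_on_subset[OF assms(1)] by (intro image_closure_subset closure_subset) auto
  then show "range h \<subseteq> closure (h ` S)"
    using assms(2) by simp
qed

lemma closed_range_graph:
  fixes f :: "'a::topological_space \<Rightarrow> 'b::t2_space"
  assumes "continuous_on UNIV f"
  shows "closed (range (\<lambda>x. (x, f x)))"
proof -
  have "range (\<lambda>x. (x, f x)) = {p. snd p = f (fst p)}"
    by auto
  moreover have "closed {p. snd p = f (fst p)}"
    by (intro closed_Collect_eq continuous_on_snd continuous_on_id
        continuous_on_compose2[OF assms continuous_on_fst]) auto
  ultimately show ?thesis
    by simp
qed

lemma closed_range_converse_graph:
  fixes f :: "'a::topological_space \<Rightarrow> 'b::t2_space"
  assumes "continuous_on UNIV f"
  shows "closed (range (\<lambda>x. (f x, x)))"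
proof -
  have "range (\<lambda>x. (f x, x)) = {p. fst p = f (snd p)}"
    by auto
  moreover have "closed {p. fst p = f (snd p)}"
    by (intro closed_Collect_eq continuous_on_fst continuous_on_id
        continuous_on_compose2[OF assms continuous_on_snd]) auto
  ultimately show ?thesis
    by simp
qed

lemma bounded_below_dense_imp_bounded_below:
  fixes J :: "'a::real_normed_vector \<Rightarrow> 'b::real_normed_vector"
  assumes "bounded_linear J" and "closure S = UNIV"
    and "\<And>u. u \<in> S \<Longrightarrow> norm u \<le> M * norm (J u)"
  shows "norm u \<le> M * norm (J u)"
proof -
  have "closed {u. norm u \<le> M * norm (J u)}"
    using assms(1) by (intro closed_Collect_le continuous_intros linear_continuous_on)
  then have "closure S \<subseteq> {u. norm u \<le> M * norm (J u)}"
    using assms(3) by (intro closure_minimal) auto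
  then show ?thesis
    using assms(2) by auto
qed

lemma linear_inv_bij:
  assumes "linear f" and "bij f"
  shows "linear (inv f)"
proof -
  have f_inv: "f (inv f y) = y" and inv_f: "inv f (f x) = x" for x y
    using assms(2) by (simp_all add: bij_is_surj surj_f_inv_f bij_is_inj)
  show ?thesis
  proof (rule linearI)
    show "inv f (x + y) = inv f x + inv f y" for x y
      using inv_f[of "inv f x + inv f y"] by (simp add: linear_add[OF assms(1)] f_inv)
    show "inv f (c *\<^sub>R x) = c *\<^sub>R inv f x" for c x
      using inv_f[of "c *\<^sub>R inv f x"] by (simp add: linear_scale[OF assms(1)] f_inv)
  qed
qed

lemma isomorphism_imp_bounded_below:
  assumes "isomorphism J"
  obtains M where "\<And>u. norm u \<le> M * norm (J u)"
proof -
  have "bounded_linear (inv J)" and "inj J"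
    using assms unfolding isomorphism_def bij_def by auto
  then obtain K where "\<And>x. norm (inv J x) \<le> norm x * K"
    using bounded_linear.bounded by blast
  then have "norm u \<le> K * norm (J u)" for u
    using \<open>inj J\<close> by (metis inv_f_f mult.commute)
  then show thesis
    by (rule that)
qed

lemma bounded_below_dense_range_imp_isomorphism:
  fixes J :: "'a::{real_normed_vector,complete_space} \<Rightarrow> 'b::real_normed_vector"
  assumes J: "bounded_linear J" and dense: "closure (range J) = UNIV"
    and below: "\<And>u. norm u \<le> M * norm (J u)"
  shows "isomorphism J"
proof -
  define M' where "M' = max M 1"
  have "M' > 0" and below': "norm u \<le> M' * norm (J u)" for u
    unfolding M'_def by (auto intro!: order_trans[OF below] mult_right_mono)
  have "inj J"
  proof (rule injI)
    fix u v
    assume "J u = J v"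
    then have "J (u - v) = 0"
      by (simp add: linear_diff[OF bounded_linear.linear[OF J]])
    then show "u = v"
      using below'[of "u - v"] by simp
  qed
  have "\<forall>u\<in>UNIV. norm (J u) \<ge> (1 / M') * norm u"
    using below' \<open>M' > 0\<close> by (simp add: pos_divide_le_eq mult.commute)
  then have "complete (range J)"
    using \<open>M' > 0\<close>
    by (intro complete_isometric_image[of "1 / M'" UNIV J, OF _ subspace_UNIV J])
      (auto simp: complete_UNIV)
  then have "surj J"
    using dense complete_imp_closed by fastforce
  with \<open>inj J\<close> have "bij J"
    by (simp add: bij_def)
  have "bounded_linear (inv J)"
  proof (rule bounded_linear.intro)
    show "linear (inv J)"
      using J \<open>bij J\<close> by (simp add: linear_inv_bij bounded_linear.linear)
    show "bounded_linear_axioms (inv J)"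
      using below'[of "inv J _"] \<open>surj J\<close>
      by (intro bounded_linear_axioms.intro exI[of _ M'])
        (simp add: surj_f_inv_f mult.commute)
  qed
  with J \<open>bij J\<close> show ?thesis
    unfolding isomorphism_def by simp
qed

lemma pullback_tripleD:
  assumes "pullback_triple J F D Y"
  shows "bounded_linear J" and "closure (range J) = UNIV"
    and "inj_on Y D" and "closure (Y ` D) = UNIV"
    and "\<And>f. f \<in> D \<Longrightarrow> J (Y f) = f"
  using assms unfolding pullback_triple_def completion_op_def by auto

lemma pullback_closure_graph_inverse:
  assumes "pullback_triple J F D Y"
  shows "closure (graph (Y ` D) (inv_into D Y)) = graph UNIV J"
proof -
  note P = pullback_tripleD[OF assms]
  have cont: "continuous_on UNIV J"
    using P(1) by (rule linear_continuous_on)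
  have "graph (Y ` D) (inv_into D Y) = (\<lambda>x. (x, J x)) ` Y ` D"
    unfolding graph_eq_image image_image using P(3,5) by (intro image_cong) auto
  then show ?thesis
    using closure_image_dense[OF _ P(4) closed_range_graph[OF cont]] cont
    by (simp add: graph_eq_image continuous_intros)
qed

lemma pullback_closure_graph:
  assumes "pullback_triple J F D Y"
  shows "closure (graph D Y) = range (\<lambda>x. (J x, x))"
proof -
  note P = pullback_tripleD[OF assms]
  have cont: "continuous_on UNIV J"
    using P(1) by (rule linear_continuous_on)
  have "graph D Y = (\<lambda>x. (J x, x)) ` Y ` D"
    unfolding graph_eq_image image_image using P(5) by (intro image_cong) auto
  then show ?thesis
    using closure_image_dense[OF _ P(4) closed_range_converse_graph[OF cont]] cont
    by (simp add: continuous_intros)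
qed

lemma pullback_bounded_op_iff_isomorphism:
  assumes "pullback_triple J F D Y"
  shows "bounded_op D Y \<longleftrightarrow> isomorphism J"
proof -
  note P = pullback_tripleD[OF assms]
  have "bounded_op D Y \<longleftrightarrow> (\<exists>M. \<forall>u\<in>Y ` D. norm u \<le> M * norm (J u))"
    unfolding bounded_op_def using P(5) by auto
  also have "\<dots> \<longleftrightarrow> (\<exists>M. \<forall>u. norm u \<le> M * norm (J u))"
    using bounded_below_dense_imp_bounded_below[OF P(1) P(4)] by blast
  also have "\<dots> \<longleftrightarrow> isomorphism J"
    using bounded_below_dense_range_imp_isomorphism[OF P(1,2)] isomorphism_imp_bounded_below
    by metis
  finally show ?thesis .
qed

theorem mainTheorem3:
  fixes J :: "'x::{real_inner,complete_space} \<Rightarrow> 'h::{real_inner,complete_space}"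
    and F :: "'x \<Rightarrow> 'e::{real_inner,complete_space}"
    and D :: "'h set" and Y :: "'h \<Rightarrow> 'x"
  assumes "pullback_triple J F D Y"
  shows "(closable (Y ` D) (inv_into D Y) \<and> closure (graph (Y ` D) (inv_into D Y)) = graph UNIV J)
       \<and> (closable D Y \<longleftrightarrow> inj J)
       \<and> (inj J \<longrightarrow> closure (graph D Y) = graph (range J) (inv J))
       \<and> (bounded_op D Y \<longleftrightarrow> isomorphism J)"
proof -
  note inverse_graph = pullback_closure_graph_inverse[OF assms]
  note Y_graph = pullback_closure_graph[OF assms]
  have "closable (Y ` D) (inv_into D Y)"
    unfolding closable_def inverse_graph by (auto simp: graph_def)
  moreover have "closable D Y \<longleftrightarrow> inj J"
    unfolding closable_def Y_graph inj_def by blast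
  moreover have "closure (graph D Y) = graph (range J) (inv J)" if "inj J"
    using that by (simp add: Y_graph graph_eq_image[of "range J"] image_image)
  ultimately show ?thesis
    using inverse_graph pullback_bounded_op_iff_isomorphism[OF assms] by blast
qed

end
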